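(* Let $G$ be a group endowed with a topology (no compatibility between the group structure and the topology is assumed). Suppose there exists an integer $c>0$ such that every solvable subgroup of $G$ has derived length at most $c$. Then every solvable (resp. connected solvable) subgroup of $G$ is contained in a maximal solvable (resp. maximal connected solvable) subgroup of $G$.
   Context: Derived length of a solvable group $H$: the least $k$ with $D^k(H)=\{1\}$, where $D^0(H)=H$ and $D^{k}(H)$ is the commutator subgroup of $D^{k-1}(H)$. A subgroup is connected if it is connected for the induced topology. *)

theory Defs
  imports "HOL-Analysis.Analysis" "HOL-Algebra.Solvable_Groups"
begin

definition solvable_subgroup :: "('a, 'b) monoid_scheme \<Rightarrow> 'a set \<Rightarrow> bool" where
  "solvable_subgroup G H \<longleftrightarrow> subgroup H G \<and> solvable (G\<lparr>carrier := H\<rparr>)"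

definition derived_length :: "('a, 'b) monoid_scheme \<Rightarrow> 'a set \<Rightarrow> nat" where
  "derived_length G H = (LEAST k. (derived G ^^ k) H = {\<one>\<^bsub>G\<^esub>})"

end

theory Submission
  imports Defs
begin

text \<open>Under the bound, the solvable subgroups are exactly the subgroups \<open>H\<close> with \<open>D\<^sup>c(H) = 1\<close>.
  Any two elements of the union of a chain lie in a common member, so \<open>D\<^sup>c\<close> of the union of a
  chain of subgroups lies in the union of the \<open>D\<^sup>c\<close> of the members. Hence the union of a chain of
  solvable subgroups is solvable; if the members are connected it is connected too, since they all
  contain \<open>1\<close>. Zorn's lemma then gives the maximal elements.\<close>

lemma chain_subset_Union_pair:
  assumes "chain\<^sub>\<subseteq> C" "x \<in> \<Union>C" "y \<in> \<Union>C"
  obtains A where "A \<in> C" "x \<in> A" "y \<in> A"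
  using assms unfolding chain_subset_def by blast

lemma chain_subset_image:
  assumes "chain\<^sub>\<subseteq> C" "\<And>A B. A \<subseteq> B \<Longrightarrow> f A \<subseteq> f B"
  shows "chain\<^sub>\<subseteq> (f ` C)"
  using assms unfolding chain_subset_def by (metis image_iff)

context group
begin

lemma subgroup_Union_chain:
  assumes "C \<noteq> {}" "\<And>K. K \<in> C \<Longrightarrow> subgroup K G" "chain\<^sub>\<subseteq> C"
  shows "subgroup (\<Union>C) G"
proof
  show "\<Union>C \<subseteq> carrier G" using assms(2) subgroup.subset by blast
  show "\<one> \<in> \<Union>C" using assms(1,2) subgroup.one_closed by blast
next
  fix x assume "x \<in> \<Union>C"
  then obtain A where "A \<in> C" "x \<in> A" by blast
  then show "inv x \<in> \<Union>C" using subgroup.m_inv_closed[OF assms(2)] by blast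
next
  fix x y assume "x \<in> \<Union>C" "y \<in> \<Union>C"
  with assms(3) obtain A where "A \<in> C" "x \<in> A" "y \<in> A" by (rule chain_subset_Union_pair)
  then show "x \<otimes> y \<in> \<Union>C" using subgroup.m_closed[OF assms(2)] by blast
qed

lemma derived_Union_chain_subset:
  assumes "C \<noteq> {}" "\<And>K. K \<in> C \<Longrightarrow> subgroup K G" "chain\<^sub>\<subseteq> C"
  shows "derived G (\<Union>C) \<subseteq> \<Union>(derived G ` C)"
proof -
  have "subgroup (\<Union>(derived G ` C)) G"
  proof (rule subgroup_Union_chain)
    show "chain\<^sub>\<subseteq> (derived G ` C)" using assms(3) mono_derived by (rule chain_subset_image)
  next
    show "derived G ` C \<noteq> {}" using assms(1) by simp
  next
    fix K assume "K \<in> derived G ` C"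
    then obtain A where "A \<in> C" "K = derived G A" by blast
    then show "subgroup K G" using derived_is_subgroup[OF subgroup.subset[OF assms(2)]] by simp
  qed
  moreover have "derived_set G (\<Union>C) \<subseteq> \<Union>(derived G ` C)"
  proof
    fix z assume "z \<in> derived_set G (\<Union>C)"
    then obtain x y where xy: "x \<in> \<Union>C" "y \<in> \<Union>C" and z: "z = x \<otimes> y \<otimes> inv x \<otimes> inv y"
      by auto
    from assms(3) xy obtain A where A: "A \<in> C" "x \<in> A" "y \<in> A" by (rule chain_subset_Union_pair)
    with z have "z \<in> derived_set G A" by blast
    then have "z \<in> derived G A" unfolding derived_def by (rule generate.incl)
    with A show "z \<in> \<Union>(derived G ` C)" by blast
  qed
  ultimately show ?thesis unfolding derived_def[of G "\<Union>C"] by (rule generate_subgroup_incl[rotated])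
qed

lemma exp_derived_Union_chain_subset:
  assumes "C \<noteq> {}" "\<And>K. K \<in> C \<Longrightarrow> subgroup K G" "chain\<^sub>\<subseteq> C"
  shows "(derived G ^^ n) (\<Union>C) \<subseteq> \<Union>((derived G ^^ n) ` C)"
proof (induction n)
  case 0
  show ?case by simp
next
  case (Suc n)
  have "(derived G ^^ Suc n) (\<Union>C) \<subseteq> derived G (\<Union>((derived G ^^ n) ` C))"
    using Suc mono_derived by simp
  also have "\<dots> \<subseteq> \<Union>(derived G ` (derived G ^^ n) ` C)"
  proof (rule derived_Union_chain_subset)
    show "chain\<^sub>\<subseteq> ((derived G ^^ n) ` C)"
      using assms(3) mono_exp_of_derived by (rule chain_subset_image)
  qed (use assms(1,2) exp_of_derived_is_subgroup in auto)
  also have "\<dots> = \<Union>((derived G ^^ Suc n) ` C)"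
    by (simp add: image_comp)
  finally show ?case .
qed

lemma exp_derived_subgroup_subset:
  assumes "subgroup H G" shows "(derived G ^^ n) H \<subseteq> H"
  using assms by (induction n) (auto dest: derived_incl[rotated])

lemma exp_derived_eq_one_mono:
  assumes "subgroup H G" "(derived G ^^ n) H = {\<one>}" "n \<le> m"
  shows "(derived G ^^ m) H = {\<one>}"
proof -
  have "(derived G ^^ m) H = (derived G ^^ (m - n)) {\<one>}"
    using assms(2,3) by (metis funpow_add le_add_diff_inverse2 o_apply)
  also have "\<dots> = {\<one>}"
    using exp_derived_subgroup_subset[OF triv_subgroup]
      subgroup.one_closed[OF exp_of_derived_is_subgroup[OF triv_subgroup]] by blast
  finally show ?thesis .
qed

lemma solvable_subgroup_iff:
  "solvable_subgroup G H \<longleftrightarrow> subgroup H G \<and> (\<exists>n. (derived G ^^ n) H = {\<one>})"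
proof (cases "subgroup H G")
  case True
  interpret H: group "G\<lparr>carrier := H\<rparr>" using subgroup_imp_group[OF True] .
  have "(derived (G\<lparr>carrier := H\<rparr>) ^^ n) H = (derived G ^^ n) H" for n
    by (induction n) (simp_all add: derived_consistent exp_derived_subgroup_subset True)
  then show ?thesis
    unfolding solvable_subgroup_def using True H.solvable_iff_trivial_derived_seq by simp
qed (simp add: solvable_subgroup_def)

lemma solvable_subgroup_derived_length_le_iff:
  "solvable_subgroup G H \<and> derived_length G H \<le> c \<longleftrightarrow>
     subgroup H G \<and> (derived G ^^ c) H = {\<one>}"
proof
  assume H: "solvable_subgroup G H \<and> derived_length G H \<le> c"
  then obtain n where "subgroup H G" and n: "(derived G ^^ n) H = {\<one>}"
    using solvable_subgroup_iff by blast
  from n have "(derived G ^^ derived_length G H) H = {\<one>}"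
    unfolding derived_length_def by (rule LeastI)
  with H \<open>subgroup H G\<close> show "subgroup H G \<and> (derived G ^^ c) H = {\<one>}"
    using exp_derived_eq_one_mono by blast
next
  assume "subgroup H G \<and> (derived G ^^ c) H = {\<one>}"
  then show "solvable_subgroup G H \<and> derived_length G H \<le> c"
    unfolding derived_length_def using solvable_subgroup_iff by (blast intro: Least_le)
qed

lemma solvable_subgroup_Union_chain:
  assumes "C \<noteq> {}" "chain\<^sub>\<subseteq> C"
    and solv: "\<And>K. K \<in> C \<Longrightarrow> solvable_subgroup G K \<and> derived_length G K \<le> c"
  shows "solvable_subgroup G (\<Union>C) \<and> derived_length G (\<Union>C) \<le> c"
proof -
  have sub: "subgroup K G" "(derived G ^^ c) K = {\<one>}" if "K \<in> C" for K
    using solv[OF that] solvable_subgroup_derived_length_le_iff by blast+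
  then have U: "subgroup (\<Union>C) G" using assms(1,2) by (blast intro: subgroup_Union_chain)
  have "(derived G ^^ c) (\<Union>C) \<subseteq> \<Union>((derived G ^^ c) ` C)"
    using assms(1) sub(1) assms(2) by (rule exp_derived_Union_chain_subset)
  then have "(derived G ^^ c) (\<Union>C) \<subseteq> {\<one>}" using sub(2) by blast
  moreover have "\<one> \<in> (derived G ^^ c) (\<Union>C)"
    using U by (intro subgroup.one_closed exp_of_derived_is_subgroup)
  ultimately show ?thesis
    using U solvable_subgroup_derived_length_le_iff by blast
qed

lemma maximal_solvable_subgroup_exists:
  assumes bound: "\<And>K. solvable_subgroup G K \<Longrightarrow> derived_length G K \<le> c"
    and H: "solvable_subgroup G H" "Q H"
    and Q_chain: "\<And>C. C \<noteq> {} \<Longrightarrow> chain\<^sub>\<subseteq> C \<Longrightarrow> (\<And>M. M \<in> C \<Longrightarrow> H \<subseteq> M \<and> Q M) \<Longrightarrow> Q (\<Union>C)"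
  shows "\<exists>M. H \<subseteq> M \<and> solvable_subgroup G M \<and> Q M \<and>
           (\<forall>K. solvable_subgroup G K \<and> Q K \<and> M \<subseteq> K \<longrightarrow> K = M)"
proof -
  define \<A> where "\<A> = {M. H \<subseteq> M \<and> solvable_subgroup G M \<and> Q M}"
  have "\<exists>M\<in>\<A>. \<forall>K\<in>\<A>. M \<subseteq> K \<longrightarrow> K = M"
  proof (rule subset_Zorn_nonempty)
    show "\<A> \<noteq> {}" using H unfolding \<A>_def by blast
  next
    fix C assume C: "C \<noteq> {}" "subset.chain \<A> C"
    then have ch: "chain\<^sub>\<subseteq> C" and mem: "\<And>M. M \<in> C \<Longrightarrow> M \<in> \<A>"
      unfolding chain_subset_alt_def subset_chain_def by auto
    have "solvable_subgroup G (\<Union>C)"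
    proof -
      have "solvable_subgroup G K \<and> derived_length G K \<le> c" if "K \<in> C" for K
        using mem[OF that] bound unfolding \<A>_def by simp
      from solvable_subgroup_Union_chain[OF C(1) ch this] show ?thesis ..
    qed
    moreover have "Q (\<Union>C)" by (rule Q_chain[OF C(1) ch]) (use mem in \<open>simp add: \<A>_def\<close>)
    moreover have "H \<subseteq> \<Union>C" using C(1) mem unfolding \<A>_def by blast
    ultimately show "\<Union>C \<in> \<A>" unfolding \<A>_def by simp
  qed
  then obtain M where "M \<in> \<A>" and max: "\<And>K. K \<in> \<A> \<Longrightarrow> M \<subseteq> K \<Longrightarrow> K = M"
    by blast
  then have M: "H \<subseteq> M" "solvable_subgroup G M" "Q M" unfolding \<A>_def by simp_all
  have "K = M" if "solvable_subgroup G K \<and> Q K \<and> M \<subseteq> K" for K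
    using that M(1) by (intro max) (auto simp: \<A>_def)
  with M show ?thesis by blast
qed

end

theorem proposition3p10:
  fixes G :: "('a, 'b) monoid_scheme" and T :: "'a topology" and c :: nat
  assumes "group G"
    and "topspace T = carrier G"
    and "c > 0"
    and "\<forall>H. solvable_subgroup G H \<longrightarrow> derived_length G H \<le> c"
  shows "(\<forall>H. solvable_subgroup G H \<longrightarrow>
            (\<exists>M. H \<subseteq> M \<and> solvable_subgroup G M \<and>
                 (\<forall>K. solvable_subgroup G K \<and> M \<subseteq> K \<longrightarrow> K = M)))
       \<and> (\<forall>H. solvable_subgroup G H \<and> connectedin T H \<longrightarrow>
            (\<exists>M. H \<subseteq> M \<and> solvable_subgroup G M \<and> connectedin T M \<and>
                 (\<forall>K. solvable_subgroup G K \<and> connectedin T K \<and> M \<subseteq> K \<longrightarrow> K = M)))"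
proof -
  note maximal = group.maximal_solvable_subgroup_exists[OF assms(1) assms(4)[rule_format]]
  have "\<exists>M. H \<subseteq> M \<and> solvable_subgroup G M \<and>
          (\<forall>K. solvable_subgroup G K \<and> M \<subseteq> K \<longrightarrow> K = M)"
    if "solvable_subgroup G H" for H
    using maximal[of H "\<lambda>_. True"] that by simp
  moreover have "\<exists>M. H \<subseteq> M \<and> solvable_subgroup G M \<and> connectedin T M \<and>
          (\<forall>K. solvable_subgroup G K \<and> connectedin T K \<and> M \<subseteq> K \<longrightarrow> K = M)"
    if H: "solvable_subgroup G H" "connectedin T H" for H
  proof (rule maximal)
    have "\<one>\<^bsub>G\<^esub> \<in> H" using H(1) subgroup.one_closed unfolding solvable_subgroup_def by blast
    fix C assume "C \<noteq> {}" and C: "\<And>M. M \<in> C \<Longrightarrow> H \<subseteq> M \<and> connectedin T M"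
    with \<open>\<one>\<^bsub>G\<^esub> \<in> H\<close> have "\<one>\<^bsub>G\<^esub> \<in> \<Inter>C" by blast
    with C show "connectedin T (\<Union>C)" by (blast intro: connectedin_Union)
  qed (use H in simp_all)
  ultimately show ?thesis by (intro conjI allI impI) simp_all
qed

end
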